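(* Let $K\ge1$ and let $f(z)=\sum_{n=0}^\infty a_nz^n+\sum_{n=1}^\infty\overline{b_n}\,\overline{z}^n$ be a $K$-quasiconformal harmonic mapping on $\mathbb{D}$. If there is a constant $M>0$ such that $\ell_f^{\ast}(\theta,1)\le M$ for all $\theta\in[0,2\pi]$, then $|a_n|+|b_n|\le KM$ for all $n\ge1$. In particular, if $K=1$ the estimate is sharp, with extremal function $f(z)=Mz$.
   Context: $\mathbb{D}$ is the open unit disk. A sense-preserving homeomorphism $f\in W^{1,2}_{loc}$ is $K$-quasiconformal if $(|f_z|+|f_{\bar z}|)^2\le K(|f_z|^2-|f_{\bar z}|^2)$. For a harmonic mapping $f$ in $\mathbb{D}$, $\theta\in[0,2\pi]$ and $r\in[0,1)$, $\ell_f^{\ast}(\theta,r)=\int_0^r\left|f_z(\rho e^{i\theta})+e^{-2i\theta}f_{\bar z}(\rho e^{i\theta})\right|d\rho$, and $\ell_f^{\ast}(\theta,1)=\sup_{0<r<1}\ell_f^{\ast}(\theta,r)$. *)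

theory Defs
  imports "HOL-Analysis.Analysis"
begin

definition wirt_z :: "(complex \<Rightarrow> complex) \<Rightarrow> complex \<Rightarrow> complex" where
  "wirt_z f z = (frechet_derivative f (at z) 1 - \<i> * frechet_derivative f (at z) \<i>) / 2"

definition wirt_zbar :: "(complex \<Rightarrow> complex) \<Rightarrow> complex \<Rightarrow> complex" where
  "wirt_zbar f z = (frechet_derivative f (at z) 1 + \<i> * frechet_derivative f (at z) \<i>) / 2"

definition harm_series :: "(nat \<Rightarrow> complex) \<Rightarrow> (nat \<Rightarrow> complex) \<Rightarrow> complex \<Rightarrow> complex" where
  "harm_series a b z = (\<Sum>n. a n * z ^ n) + (\<Sum>n. cnj (b (Suc n)) * cnj z ^ Suc n)"

definition harmonic_series_on_disk :: "(nat \<Rightarrow> complex) \<Rightarrow> (nat \<Rightarrow> complex) \<Rightarrow> bool" where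
  "harmonic_series_on_disk a b \<longleftrightarrow>
     (\<forall>z\<in>ball 0 1. summable (\<lambda>n. a n * z ^ n) \<and> summable (\<lambda>n. b n * z ^ n))"

text \<open>For smooth (harmonic) f the
  W^{1,2}_loc requirement is automatic; we require differentiability everywhere and
  sense-preserving means positive Jacobian |f_z|^2 - |f_zbar|^2 > 0.\<close>
definition K_quasiconformal_on :: "real \<Rightarrow> (complex \<Rightarrow> complex) \<Rightarrow> complex set \<Rightarrow> bool" where
  "K_quasiconformal_on K f S \<longleftrightarrow>
     (\<exists>g. homeomorphism S (f ` S) f g) \<and>
     (\<forall>z\<in>S. f differentiable (at z) \<and>
        (cmod (wirt_z f z))\<^sup>2 - (cmod (wirt_zbar f z))\<^sup>2 > 0 \<and>
        (cmod (wirt_z f z) + cmod (wirt_zbar f z))\<^sup>2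
          \<le> K * ((cmod (wirt_z f z))\<^sup>2 - (cmod (wirt_zbar f z))\<^sup>2))"

definition ell_star :: "(complex \<Rightarrow> complex) \<Rightarrow> real \<Rightarrow> real \<Rightarrow> real" where
  "ell_star f \<theta> r = integral {0..r}
     (\<lambda>\<rho>. cmod (wirt_z f (of_real \<rho> * cis \<theta>) + cis (-2 * \<theta>) * wirt_zbar f (of_real \<rho> * cis \<theta>)))"

definition ell_star1 :: "(complex \<Rightarrow> complex) \<Rightarrow> real \<Rightarrow> ereal" where
  "ell_star1 f \<theta> = (SUP r\<in>{0<..<1}. ereal (ell_star f \<theta> r))"

end

theory Submission imports Defs "HOL-Complex_Analysis.Complex_Analysis" begin

text \<open>Write f = h + cnj g with h(z) = \<Sum> a_n z^n and g(z) = \<Sum> b_n z^n, so that f_z = h' and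
  f_zbar = cnj g'. The quasiconformality inequality |h'| + |g'| \<le> K (|h'| - |g'|) gives
  |h'| \<le> (K+1)/2 (|h'| - |g'|) and |g'| \<le> (K-1)/2 (|h'| - |g'|), while |h'| - |g'| bounds the
  integrand of \<ell>*_f from below in every direction. Integrating along radii yields
  |h(z) - h(0)| \<le> (K+1)M/2 and |g(z) - g(0)| \<le> (K-1)M/2 on the disk, and Cauchy's estimate
  bounds |a_n| and |b_n| by these two constants.\<close>

lemma eval_fps_Abs_fps: "eval_fps (Abs_fps c) = (\<lambda>z. \<Sum>n. c n * z ^ n)"
  by (simp add: eval_fps_def fun_eq_iff)

lemma conv_radius_ge_1_if_summable_on_ball:
  fixes c :: "nat \<Rightarrow> complex"
  assumes "\<forall>z\<in>ball 0 1. summable (\<lambda>n. c n * z ^ n)"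
  shows "fps_conv_radius (Abs_fps c) \<ge> 1"
  unfolding fps_conv_radius_def
proof (rule conv_radius_geI_ex')
  fix r :: real assume "0 < r" "ereal r < 1"
  thus "summable (\<lambda>n. fps_nth (Abs_fps c) n * of_real r ^ n)"
    using assms by auto
qed

lemma power_series_has_fps_expansion:
  fixes c :: "nat \<Rightarrow> complex"
  assumes "\<forall>z\<in>ball 0 1. summable (\<lambda>n. c n * z ^ n)"
  shows "(\<lambda>z. \<Sum>n. c n * z ^ n) has_fps_expansion Abs_fps c"
proof -
  have "fps_conv_radius (Abs_fps c) > 0"
    using conv_radius_ge_1_if_summable_on_ball[OF assms] by (rule less_le_trans[rotated]) simp
  from eval_fps_has_fps_expansion[OF this] show ?thesis
    by (simp add: eval_fps_Abs_fps)
qed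

lemma holomorphic_on_power_series_ball:
  fixes c :: "nat \<Rightarrow> complex"
  assumes "\<forall>z\<in>ball 0 1. summable (\<lambda>n. c n * z ^ n)"
  shows "(\<lambda>z. \<Sum>n. c n * z ^ n) holomorphic_on ball 0 1"
proof -
  have "ball (0::complex) 1 \<subseteq> eball 0 (fps_conv_radius (Abs_fps c))"
  proof (rule subsetI)
    fix z :: complex assume "z \<in> ball 0 1"
    hence "ereal (norm z) < 1" by simp
    also have "\<dots> \<le> fps_conv_radius (Abs_fps c)"
      by (rule conv_radius_ge_1_if_summable_on_ball[OF assms])
    finally show "z \<in> eball 0 (fps_conv_radius (Abs_fps c))" by (simp add: dist_norm)
  qed
  from holomorphic_on_eval_fps[OF this] show ?thesis
    by (simp add: eval_fps_Abs_fps)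
qed

lemma power_series_coeff_le:
  fixes c :: "nat \<Rightarrow> complex"
  assumes sm: "\<forall>z\<in>ball 0 1. summable (\<lambda>n. c n * z ^ n)"
    and bound: "\<And>z. z \<in> ball 0 1 \<Longrightarrow> norm ((\<Sum>n. c n * z ^ n) - c 0) \<le> B"
    and n: "n \<ge> 1"
  shows "norm (c n) \<le> B"
proof -
  define P where "P = (\<lambda>z. (\<Sum>n. c n * z ^ n) - c 0)"
  have "P has_fps_expansion Abs_fps c - fps_const (c 0)"
    unfolding P_def by (intro has_fps_expansion_diff power_series_has_fps_expansion sm
        has_fps_expansion_const)
  from fps_nth_fps_expansion[OF this, of n] n
  have coeff: "c n = (deriv ^^ n) P 0 / fact n"
    by simp
  have holo: "P holomorphic_on ball 0 1"
    unfolding P_def by (intro holomorphic_intros holomorphic_on_power_series_ball[OF sm])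
  have scaled: "norm (c n) * s ^ n \<le> B" if s: "0 < s" "s < 1" for s
  proof -
    have "norm ((deriv ^^ n) P 0) \<le> fact n * B / s ^ n"
    proof (rule Cauchy_inequality)
      show "P holomorphic_on ball 0 s"
        using holo by (rule holomorphic_on_subset) (use s in auto)
      show "continuous_on (cball 0 s) P"
        using holomorphic_on_imp_continuous_on[OF holo] by (rule continuous_on_subset) (use s in auto)
      show "norm (P x) \<le> B" if "norm (0 - x) = s" for x
        using bound[of x] that s by (simp add: P_def)
    qed fact
    thus ?thesis
      using s by (simp add: coeff norm_divide field_simps)
  qed
  have "((\<lambda>s. norm (c n) * s ^ n) \<longlongrightarrow> norm (c n) * 1 ^ n) (at_left (1::real))"
    by (intro tendsto_intros)
  moreover have "eventually (\<lambda>s. norm (c n) * s ^ n \<le> B) (at_left (1::real))"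
    using eventually_at_left_real[of 0 "1::real"] by (auto elim!: eventually_mono intro: scaled)
  ultimately show ?thesis
    by (simp add: tendsto_upperbound)
qed

lemma norm_diff_le_radial_integral:
  fixes P P' Q :: "complex \<Rightarrow> complex"
  assumes der: "\<And>w. w \<in> ball 0 1 \<Longrightarrow> (P has_field_derivative P' w) (at w)"
    and contQ: "continuous_on (ball 0 1) Q"
    and deriv_le: "\<And>w. w \<in> ball 0 1 \<Longrightarrow> cmod (P' w) \<le> c * cmod (Q w)"
    and r: "0 \<le> r" "r < 1"
  shows "cmod (P (of_real r * cis \<theta>) - P 0)
           \<le> c * integral {0..r} (\<lambda>\<rho>. cmod (Q (of_real \<rho> * cis \<theta>)))"
proof -
  have on_ball: "of_real \<rho> * cis \<theta> \<in> ball 0 1" if "\<rho> \<in> {0..r}" for \<rho>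
    using that r by (auto simp: norm_mult)
  have "((\<lambda>\<rho>. P (of_real \<rho> * cis \<theta>)) has_vector_derivative cis \<theta> * P' (of_real \<rho> * cis \<theta>))
          (at \<rho> within {0..r})" if \<rho>: "\<rho> \<in> {0..r}" for \<rho>
  proof -
    have "((\<lambda>z. z * cis \<theta>) has_field_derivative cis \<theta>) (at (of_real \<rho>))"
      by (auto intro!: derivative_eq_intros)
    from has_vector_derivative_real_field[OF this]
    have "((\<lambda>\<rho>. of_real \<rho> * cis \<theta>) has_vector_derivative cis \<theta>) (at \<rho> within {0..r})"
      by (rule has_vector_derivative_at_within)
    moreover have "(P has_field_derivative P' (of_real \<rho> * cis \<theta>))
        (at (of_real \<rho> * cis \<theta>) within (\<lambda>\<rho>. of_real \<rho> * cis \<theta>) ` {0..r})"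
      using der[OF on_ball[OF \<rho>]] by (rule has_field_derivative_at_within)
    ultimately show ?thesis
      using field_vector_diff_chain_within by (fastforce simp: o_def)
  qed
  from fundamental_theorem_of_calculus[OF r(1) this]
  have ftc: "((\<lambda>\<rho>. cis \<theta> * P' (of_real \<rho> * cis \<theta>)) has_integral
               (P (of_real r * cis \<theta>) - P 0)) {0..r}"
    by simp
  have "continuous_on {0..r} (\<lambda>\<rho>. Q (of_real \<rho> * cis \<theta>))"
    by (rule continuous_on_compose2[OF contQ]) (auto intro!: continuous_intros on_ball)
  hence "(\<lambda>\<rho>. c * cmod (Q (of_real \<rho> * cis \<theta>))) integrable_on {0..r}"
    by (intro integrable_continuous_interval continuous_intros)
  with ftc have "norm (integral {0..r} (\<lambda>\<rho>. cis \<theta> * P' (of_real \<rho> * cis \<theta>)))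
                   \<le> integral {0..r} (\<lambda>\<rho>. c * cmod (Q (of_real \<rho> * cis \<theta>)))"
    by (intro integral_norm_bound_integral) (auto simp: norm_mult intro!: deriv_le on_ball)
  thus ?thesis
    using integral_unique[OF ftc] by simp
qed

lemma holomorphic_norm_diff_le_radial_bound:
  fixes P :: "complex \<Rightarrow> complex" and Q :: "real \<Rightarrow> complex \<Rightarrow> complex"
  assumes holo: "P holomorphic_on ball 0 1"
    and contQ: "\<And>\<theta>. continuous_on (ball 0 1) (Q \<theta>)"
    and deriv_le: "\<And>\<theta> w. w \<in> ball 0 1 \<Longrightarrow> cmod (deriv P w) \<le> c * cmod (Q \<theta> w)"
    and radial: "\<And>\<theta> r. \<theta> \<in> {0..2*pi} \<Longrightarrow> 0 \<le> r \<Longrightarrow> r < 1 \<Longrightarrow>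
                   integral {0..r} (\<lambda>\<rho>. cmod (Q \<theta> (of_real \<rho> * cis \<theta>))) \<le> M"
    and c: "c \<ge> 0" and z: "z \<in> ball 0 1"
  shows "cmod (P z - P 0) \<le> c * M"
proof -
  define \<theta> where "\<theta> = Arg2pi z"
  have \<theta>: "\<theta> \<in> {0..2*pi}" and polar: "z = of_real (cmod z) * cis \<theta>"
    using Arg2pi[of z] by (auto simp: \<theta>_def is_Arg_def cis_conv_exp)
  have "cmod (P (of_real (cmod z) * cis \<theta>) - P 0)
          \<le> c * integral {0..cmod z} (\<lambda>\<rho>. cmod (Q \<theta> (of_real \<rho> * cis \<theta>)))"
    using z by (intro norm_diff_le_radial_integral[OF _ contQ deriv_le]
        holomorphic_derivI[OF holo open_ball]) auto
  also have "\<dots> \<le> c * M"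
    using radial[OF \<theta>, of "cmod z"] z c by (intro mult_left_mono) auto
  finally show ?thesis
    using polar by simp
qed

lemma wirt_derivatives_eqI:
  assumes "(f has_derivative (\<lambda>w. p * w + cnj (q * w))) (at z)"
  shows "wirt_z f z = p" and "wirt_zbar f z = cnj q"
  using frechet_derivative_at[OF assms, symmetric]
  by (simp_all add: wirt_z_def wirt_zbar_def algebra_simps)

lemma harm_series_eq_on_ball:
  assumes hs: "harmonic_series_on_disk a b" and z: "z \<in> ball 0 1"
  shows "harm_series a b z = (\<Sum>n. a n * z ^ n) + cnj ((\<Sum>n. b n * z ^ n) - b 0)"
proof -
  have "summable (\<lambda>n. b n * z ^ n)"
    using hs z by (auto simp: harmonic_series_on_disk_def)
  hence "(\<lambda>n. b (Suc n) * z ^ Suc n) sums ((\<Sum>n. b n * z ^ n) - b 0)"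
    by (subst sums_Suc_iff) (simp add: summable_sums)
  hence "(\<lambda>n. cnj (b (Suc n)) * cnj z ^ Suc n) sums cnj ((\<Sum>n. b n * z ^ n) - b 0)"
    using sums_cnj by fastforce
  thus ?thesis
    by (simp add: harm_series_def sums_iff)
qed

lemma harm_series_has_derivative:
  assumes hs: "harmonic_series_on_disk a b" and z: "z \<in> ball 0 1"
  shows "(harm_series a b has_derivative
           (\<lambda>w. deriv (\<lambda>z. \<Sum>n. a n * z ^ n) z * w + cnj (deriv (\<lambda>z. \<Sum>n. b n * z ^ n) z * w)))
         (at z)"
proof -
  define h where "h = (\<lambda>z. \<Sum>n. a n * z ^ n)"
  define g where "g = (\<lambda>z. \<Sum>n. b n * z ^ n)"
  have "h holomorphic_on ball 0 1" "g holomorphic_on ball 0 1"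
    using hs unfolding h_def g_def harmonic_series_on_disk_def
    by (auto intro!: holomorphic_on_power_series_ball)
  hence "(h has_field_derivative deriv h z) (at z)" "(g has_field_derivative deriv g z) (at z)"
    by (auto intro: holomorphic_derivI[OF _ open_ball z])
  hence "(h has_derivative (\<lambda>w. deriv h z * w)) (at z)"
    "((\<lambda>w. g w - b 0) has_derivative (\<lambda>w. deriv g z * w)) (at z)"
    using has_derivative_diff[OF _ has_derivative_const, of g]
    by (auto simp: has_field_derivative_def)
  hence "((\<lambda>w. h w + cnj (g w - b 0)) has_derivative
           (\<lambda>w. deriv h z * w + cnj (deriv g z * w))) (at z)"
    by (intro has_derivative_add bounded_linear.has_derivative[OF bounded_linear_cnj])
  moreover have "h w + cnj (g w - b 0) = harm_series a b w" if "w \<in> ball 0 1" for w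
    using harm_series_eq_on_ball[OF hs that] by (simp add: h_def g_def)
  ultimately have "(harm_series a b has_derivative
                      (\<lambda>w. deriv h z * w + cnj (deriv g z * w))) (at z)"
    by (rule has_derivative_transform_within_open[OF _ open_ball z])
  thus ?thesis
    by (simp only: h_def g_def)
qed

lemma quasiconformal_dilatation_bounds:
  fixes u v \<omega> :: complex
  assumes jac: "(cmod u)\<^sup>2 - (cmod v)\<^sup>2 > 0"
    and qc: "(cmod u + cmod v)\<^sup>2 \<le> K * ((cmod u)\<^sup>2 - (cmod v)\<^sup>2)"
    and \<omega>: "cmod \<omega> = 1"
  shows "K \<ge> 1"
    and "cmod u \<le> (K + 1) / 2 * cmod (u + \<omega> * v)"
    and "cmod v \<le> (K - 1) / 2 * cmod (u + \<omega> * v)"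
proof -
  define x y where "x = cmod u" and "y = cmod v"
  have "y \<ge> 0" "y < x"
    using jac unfolding x_def y_def by (auto intro: power_less_imp_less_base[of _ 2])
  have "x\<^sup>2 - y\<^sup>2 = (x - y) * (x + y)"
    by (simp add: power2_eq_square algebra_simps)
  with qc have "(x + y) * (x + y) \<le> (K * (x - y)) * (x + y)"
    by (simp add: x_def y_def power2_eq_square mult.assoc)
  hence dil: "x + y \<le> K * (x - y)"
    using \<open>y \<ge> 0\<close> \<open>y < x\<close> by (simp add: mult_le_cancel_right)
  thus K: "K \<ge> 1"
    using \<open>y \<ge> 0\<close> \<open>y < x\<close> by (smt (verit) mult_le_cancel_right1)
  have low: "x - y \<le> cmod (u + \<omega> * v)"
    using norm_diff_ineq[of u "\<omega> * v"] \<omega> by (simp add: norm_mult x_def y_def)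
  show "cmod u \<le> (K + 1) / 2 * cmod (u + \<omega> * v)"
    using dil mult_left_mono[OF low, of "K + 1"] K by (simp add: x_def y_def algebra_simps)
  show "cmod v \<le> (K - 1) / 2 * cmod (u + \<omega> * v)"
    using dil mult_left_mono[OF low, of "K - 1"] K by (simp add: x_def y_def algebra_simps)
qed

lemma ell_star_le_if_ell_star1_le:
  assumes "ell_star1 f \<theta> \<le> ereal M" "M \<ge> 0" "0 \<le> r" "r < 1"
  shows "ell_star f \<theta> r \<le> M"
proof (cases "r = 0")
  case False
  hence "ereal (ell_star f \<theta> r) \<le> ell_star1 f \<theta>"
    using assms unfolding ell_star1_def by (intro SUP_upper) auto
  also have "\<dots> \<le> ereal M"
    by (fact assms(1))
  finally show ?thesis
    by simp
qed (use assms in \<open>simp add: ell_star_def\<close>)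

lemma harmonic_quasiconformal_coeff_bound:
  assumes hs: "harmonic_series_on_disk a b"
    and qc: "K_quasiconformal_on K (harm_series a b) (ball 0 1)"
    and ell: "\<forall>\<theta>\<in>{0..2*pi}. ell_star1 (harm_series a b) \<theta> \<le> ereal M"
    and M: "M \<ge> 0" and n: "n \<ge> 1"
  shows "cmod (a n) + cmod (b n) \<le> K * M"
proof -
  define f where "f = harm_series a b"
  define h where "h = (\<lambda>z. \<Sum>n. a n * z ^ n)"
  define g where "g = (\<lambda>z. \<Sum>n. b n * z ^ n)"
  define Q where "Q = (\<lambda>\<theta> w. wirt_z f w + cis (-2 * \<theta>) * wirt_zbar f w)"
  have sa: "\<forall>z\<in>ball 0 1. summable (\<lambda>n. a n * z ^ n)"
    and sb: "\<forall>z\<in>ball 0 1. summable (\<lambda>n. b n * z ^ n)"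
    using hs by (auto simp: harmonic_series_on_disk_def)
  have holo: "h holomorphic_on ball 0 1" "g holomorphic_on ball 0 1"
    unfolding h_def g_def using sa sb by (auto intro: holomorphic_on_power_series_ball)
  have wirt: "wirt_z f w = deriv h w" "wirt_zbar f w = cnj (deriv g w)" if "w \<in> ball 0 1" for w
    using wirt_derivatives_eqI[OF harm_series_has_derivative[OF hs that]] by (simp_all add: f_def h_def g_def)
  have qc_ineq: "(cmod (wirt_z f w))\<^sup>2 - (cmod (wirt_zbar f w))\<^sup>2 > 0"
    "(cmod (wirt_z f w) + cmod (wirt_zbar f w))\<^sup>2 \<le> K * ((cmod (wirt_z f w))\<^sup>2 - (cmod (wirt_zbar f w))\<^sup>2)"
    if "w \<in> ball 0 1" for w
    using qc that unfolding K_quasiconformal_on_def f_def by blast+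
  have K: "K \<ge> 1"
    using quasiconformal_dilatation_bounds(1)[OF qc_ineq[of 0], of 1] by simp
  have "cmod (wirt_z f w) \<le> (K + 1) / 2 * cmod (Q \<theta> w)"
    and "cmod (wirt_zbar f w) \<le> (K - 1) / 2 * cmod (Q \<theta> w)" if "w \<in> ball 0 1" for \<theta> w
    unfolding Q_def by (intro quasiconformal_dilatation_bounds qc_ineq[OF that]; simp)+
  hence deriv_h_le: "cmod (deriv h w) \<le> (K + 1) / 2 * cmod (Q \<theta> w)"
    and deriv_g_le: "cmod (deriv g w) \<le> (K - 1) / 2 * cmod (Q \<theta> w)" if "w \<in> ball 0 1" for \<theta> w
    using that by (simp_all add: wirt)
  have "continuous_on (ball 0 1) (\<lambda>w. deriv h w + cis (-2 * \<theta>) * cnj (deriv g w))" for \<theta>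
    using holo by (intro continuous_intros holomorphic_on_imp_continuous_on holomorphic_deriv) auto
  hence contQ: "continuous_on (ball 0 1) (Q \<theta>)" for \<theta>
    by (rule continuous_on_cong[THEN iffD1, rotated 2]) (auto simp: Q_def wirt)
  have radial: "integral {0..r} (\<lambda>\<rho>. cmod (Q \<theta> (of_real \<rho> * cis \<theta>))) \<le> M"
    if "\<theta> \<in> {0..2*pi}" "0 \<le> r" "r < 1" for \<theta> r
    using ell_star_le_if_ell_star1_le[of f \<theta> M r] ell that M by (simp add: ell_star_def Q_def f_def)
  have "cmod (a n) \<le> (K + 1) / 2 * M"
    using holomorphic_norm_diff_le_radial_bound[OF holo(1) contQ deriv_h_le radial] K
    by (intro power_series_coeff_le[OF sa _ n]) (simp add: h_def)
  moreover have "cmod (b n) \<le> (K - 1) / 2 * M"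
    using holomorphic_norm_diff_le_radial_bound[OF holo(2) contQ deriv_g_le radial] K
    by (intro power_series_coeff_le[OF sb _ n]) (simp add: g_def)
  ultimately show ?thesis
    by (simp add: field_simps)
qed

lemma wirt_derivatives_scaling:
  "wirt_z (\<lambda>z. c * z) w = c" "wirt_zbar (\<lambda>z. c * z) w = 0"
proof -
  have "((\<lambda>z. c * z) has_derivative (\<lambda>w. c * w + cnj (0 * w))) (at w)"
    by (auto intro!: derivative_eq_intros)
  from wirt_derivatives_eqI[OF this]
  show "wirt_z (\<lambda>z. c * z) w = c" "wirt_zbar (\<lambda>z. c * z) w = 0"
    by simp_all
qed

lemma K_quasiconformal_on_scaling:
  assumes "c \<noteq> 0"
  shows "K_quasiconformal_on 1 (\<lambda>z. c * z) S"
  unfolding K_quasiconformal_on_def wirt_derivatives_scaling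
proof (intro conjI ballI)
  show "\<exists>g. homeomorphism S ((\<lambda>z. c * z) ` S) (\<lambda>z. c * z) g"
    using assms by (intro exI[of _ "\<lambda>w. w / c"] homeomorphismI) (auto intro!: continuous_intros)
qed (use assms in auto)

lemma ell_star_scaling:
  assumes "r \<ge> 0"
  shows "ell_star (\<lambda>z. c * z) \<theta> r = r * cmod c"
  using assms by (simp add: ell_star_def wirt_derivatives_scaling)

lemma harm_series_single_coeff:
  "harm_series (\<lambda>n. if n = 1 then c else 0) (\<lambda>n. 0) = (\<lambda>z. c * z)"
  "harmonic_series_on_disk (\<lambda>n. if n = 1 then c else 0) (\<lambda>n. 0)"
proof -
  have sums: "(\<lambda>n. (if n = 1 then c else 0) * z ^ n) sums (c * z)" for z
  proof -
    have "(\<lambda>n. (if n = 1 then c else 0) * z ^ n) = (\<lambda>n. if n = 1 then c * z ^ n else 0)"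
      by auto
    thus ?thesis
      using sums_single[of 1 "\<lambda>n. c * z ^ n"] by simp
  qed
  thus "harm_series (\<lambda>n. if n = 1 then c else 0) (\<lambda>n. 0) = (\<lambda>z. c * z)"
    by (simp add: harm_series_def sums_iff fun_eq_iff)
  show "harmonic_series_on_disk (\<lambda>n. if n = 1 then c else 0) (\<lambda>n. 0)"
    using sums by (auto simp: harmonic_series_on_disk_def intro: sums_summable)
qed

theorem theorem4:
  shows "(\<forall>(K::real) (M::real) (a::nat \<Rightarrow> complex) (b::nat \<Rightarrow> complex).
            K \<ge> 1 \<longrightarrow> M > 0 \<longrightarrow> harmonic_series_on_disk a b \<longrightarrow>
            K_quasiconformal_on K (harm_series a b) (ball 0 1) \<longrightarrow>
            (\<forall>\<theta>\<in>{0..2*pi}. ell_star1 (harm_series a b) \<theta> \<le> ereal M) \<longrightarrow>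
            (\<forall>n\<ge>1. cmod (a n) + cmod (b n) \<le> K * M))
       \<and> (\<forall>M::real. M > 0 \<longrightarrow>
            (let a = (\<lambda>n::nat. if n = 1 then complex_of_real M else 0);
                 b = (\<lambda>n::nat. 0::complex) in
              harmonic_series_on_disk a b \<and>
              (\<forall>z. harm_series a b z = complex_of_real M * z) \<and>
              K_quasiconformal_on 1 (harm_series a b) (ball 0 1) \<and>
              (\<forall>\<theta>\<in>{0..2*pi}. ell_star1 (harm_series a b) \<theta> \<le> ereal M) \<and>
              cmod (a 1) + cmod (b 1) = 1 * M))"
proof (intro conjI allI impI)
  fix K M :: real and a b :: "nat \<Rightarrow> complex" and n :: nat
  assume "M > 0" "harmonic_series_on_disk a b" "K_quasiconformal_on K (harm_series a b) (ball 0 1)"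
    "\<forall>\<theta>\<in>{0..2*pi}. ell_star1 (harm_series a b) \<theta> \<le> ereal M" "n \<ge> 1"
  thus "cmod (a n) + cmod (b n) \<le> K * M"
    by (intro harmonic_quasiconformal_coeff_bound) auto
next
  fix M :: real
  assume M: "M > 0"
  have "ell_star1 (\<lambda>z. complex_of_real M * z) \<theta> \<le> ereal M" for \<theta>
    unfolding ell_star1_def using M by (intro SUP_least) (simp add: ell_star_scaling)
  thus "let a = (\<lambda>n::nat. if n = 1 then complex_of_real M else 0); b = (\<lambda>n::nat. 0::complex) in
          harmonic_series_on_disk a b \<and>
          (\<forall>z. harm_series a b z = complex_of_real M * z) \<and>
          K_quasiconformal_on 1 (harm_series a b) (ball 0 1) \<and>
          (\<forall>\<theta>\<in>{0..2*pi}. ell_star1 (harm_series a b) \<theta> \<le> ereal M) \<and>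
          cmod (a 1) + cmod (b 1) = 1 * M"
    unfolding Let_def harm_series_single_coeff
    using M harm_series_single_coeff(2) by (simp add: K_quasiconformal_on_scaling)
qed

end
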